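(* Let $n<m$ and consider the uniform-threshold game $G_t=\langle n,m,p,t\rangle$. (i) If $\frac{1}{\lceil 2m/n\rceil-1}<p\le\frac{1}{\lceil m/n\rceil}$ and $t>p-\frac{p(\lfloor 1/p\rfloor+1)-1}{\lceil 2m/n\rceil-\lfloor 1/p\rfloor}$, let $s^*$ be a pure equilibrium with $w_j(s^* )=p$ for all $j$. (ii) If $p>\frac{1}{\lceil m/n\rceil}$ and there is $\epsilon>0$ with $t\ge(1-\frac nm)\frac nm+\epsilon$ when $m\bmod n=0$, and $t\ge \frac{1}{\lceil m/n\rceil}$ otherwise, let $s^*$ be a pure equilibrium with $w_j(s^* )=\frac{1}{\lceil m/n\rceil}$ for all $j$. In both cases $s^*$ maximizes the users' social welfare, i.e. $SW(s^* )\ge SW(s)$ for every strategy profile $s$, where $SW(s)=-\max_{1\le j\le m}|p-w_j(s)|$, and it maximizes publishers' exposure: every query is won by some player.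
   Context: Setting: integers $n,m$ with $n<m$ ($n$ players, queries $q_1,\dots,q_m$), a peak value $p\in(0,1]$ and a score function $f:[0,1]\to[0,1]$ single-peaked at $p$ ($p$ is the unique point such that $f$ is non-decreasing on $[0,p]$ and non-increasing on $[p,1]$). Each player $i$ chooses $d_i\in D=\{d\in[0,1]^m:\sum_j d^j\le1\}$, with score $f(d_i^j)$ for $q_j$; $s=(d_1,\dots,d_n)$ is a strategy profile. In the game $G_t=\langle n,m,p,t\rangle$ (uniform threshold $t$ for every query), player $i$'s document is eligible for $q_j$ iff $d_i^j\ge t$; among eligible documents those of highest score are the winners of $q_j$; if $q_j$ has $h_j(s)$ winners each receives $1/h_j(s)$, and a query with no eligible document is won by no player. $w_j(s)$ denotes the value $d_i^j$ of a winner of $q_j$ ($0$ if there is none). A pure equilibrium is a pure Nash equilibrium (no player can strictly increase her utility by a unilateral change of document) in which every query has at least one winner. Such equilibria $s^*$ exist under the hypotheses of (i) and (ii). *)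

theory Defs
  imports Complex_Main
begin

text \<open>Players are indexed by i < n, queries by j < m. A document is a function
  d :: nat \<Rightarrow> real (only the entries j < m matter); a strategy profile is
  s :: nat \<Rightarrow> nat \<Rightarrow> real with s i = d_i, i.e. s i j = d_i^j.\<close>

definition doc_space :: "nat \<Rightarrow> (nat \<Rightarrow> real) set" where
  "doc_space m = {d. (\<forall>j<m. 0 \<le> d j \<and> d j \<le> 1) \<and> (\<Sum>j<m. d j) \<le> 1}"

definition profile :: "nat \<Rightarrow> nat \<Rightarrow> (nat \<Rightarrow> nat \<Rightarrow> real) \<Rightarrow> bool" where
  "profile n m s \<longleftrightarrow> (\<forall>i<n. s i \<in> doc_space m)"

definition peak_at :: "(real \<Rightarrow> real) \<Rightarrow> real \<Rightarrow> bool" where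
  "peak_at f q \<longleftrightarrow> q \<in> {0..1} \<and> monotone_on {0..q} (\<le>) (\<le>) f \<and> monotone_on {q..1} (\<le>) (\<ge>) f"

definition single_peaked :: "(real \<Rightarrow> real) \<Rightarrow> real \<Rightarrow> bool" where
  "single_peaked f p \<longleftrightarrow> (\<forall>x\<in>{0..1}. f x \<in> {0..1}) \<and> peak_at f p \<and>
     (\<forall>q. peak_at f q \<longrightarrow> q = p)"

definition winners :: "nat \<Rightarrow> (real \<Rightarrow> real) \<Rightarrow> real \<Rightarrow> (nat \<Rightarrow> nat \<Rightarrow> real) \<Rightarrow> nat \<Rightarrow> nat set" where
  "winners n f t s j = {i. i < n \<and> t \<le> s i j \<and>
      (\<forall>k<n. t \<le> s k j \<longrightarrow> f (s k j) \<le> f (s i j))}"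

definition utility :: "nat \<Rightarrow> nat \<Rightarrow> (real \<Rightarrow> real) \<Rightarrow> real \<Rightarrow> (nat \<Rightarrow> nat \<Rightarrow> real) \<Rightarrow> nat \<Rightarrow> real" where
  "utility n m f t s i = (\<Sum>j<m. if i \<in> winners n f t s j
        then 1 / real (card (winners n f t s j)) else 0)"

definition pure_NE :: "nat \<Rightarrow> nat \<Rightarrow> (real \<Rightarrow> real) \<Rightarrow> real \<Rightarrow> (nat \<Rightarrow> nat \<Rightarrow> real) \<Rightarrow> bool" where
  "pure_NE n m f t s \<longleftrightarrow> profile n m s \<and>
     (\<forall>i<n. \<forall>d\<in>doc_space m. utility n m f t (s(i := d)) i \<le> utility n m f t s i)"

definition pure_equilibrium :: "nat \<Rightarrow> nat \<Rightarrow> (real \<Rightarrow> real) \<Rightarrow> real \<Rightarrow> (nat \<Rightarrow> nat \<Rightarrow> real) \<Rightarrow> bool" where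
  "pure_equilibrium n m f t s \<longleftrightarrow> pure_NE n m f t s \<and> (\<forall>j<m. winners n f t s j \<noteq> {})"

text \<open>w_j(s): the value d_i^j of a (chosen) winner i of q_j, 0 if there is none.\<close>
definition win_val :: "nat \<Rightarrow> (real \<Rightarrow> real) \<Rightarrow> real \<Rightarrow> (nat \<Rightarrow> nat \<Rightarrow> real) \<Rightarrow> nat \<Rightarrow> real" where
  "win_val n f t s j = (if winners n f t s j = {} then 0
      else s (SOME i. i \<in> winners n f t s j) j)"

definition SW :: "nat \<Rightarrow> nat \<Rightarrow> real \<Rightarrow> (real \<Rightarrow> real) \<Rightarrow> real \<Rightarrow> (nat \<Rightarrow> nat \<Rightarrow> real) \<Rightarrow> real" where
  "SW n m p f t s = - Max ((\<lambda>j. \<bar>p - win_val n f t s j\<bar>) ` {..<m})"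

end

theory Submission
  imports Defs
begin

text \<open>Only the winning values of the equilibrium matter: the conditions on t and f
  guarantee that such an equilibrium exists, but optimality is a statement about
  all profiles. In case (i) every query is won exactly at the peak, so SW = 0, the
  largest possible value. In case (ii) let c = \<lceil>m/n\<rceil>. If in some profile every
  query were won with a value above 1/c, each player would win fewer than c queries,
  since her entries sum to at most 1; the n players would then cover at most
  n(c - 1) < m queries. So every profile has a query with w_j \<le> 1/c < p, whence
  SW \<le> -(p - 1/c), which is the welfare of the equilibrium.\<close>

lemma SW_le_win_val_dist:
  assumes "j < m"
  shows "SW n m p f t s \<le> - \<bar>p - win_val n f t s j\<bar>"
  using assms unfolding SW_def by (simp add: Max_ge)

lemma SW_const_win_val:
  assumes "0 < m" and "\<forall>j<m. win_val n f t s j = v"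
  shows "SW n m p f t s = - \<bar>p - v\<bar>"
proof -
  have "(\<lambda>j. \<bar>p - win_val n f t s j\<bar>) ` {..<m} = {\<bar>p - v\<bar>}"
    using assms by auto
  then show ?thesis unfolding SW_def by simp
qed

lemma win_val_nonzero_obtains_winner:
  assumes "win_val n f t s j \<noteq> 0"
  shows "\<exists>i<n. win_val n f t s j = s i j"
proof -
  have "winners n f t s j \<noteq> {}" using assms unfolding win_val_def by auto
  then have "(SOME i. i \<in> winners n f t s j) \<in> winners n f t s j" by (simp add: some_in_eq)
  with assms show ?thesis unfolding win_val_def winners_def by auto
qed

lemma doc_space_card_entries_gt_inverse:
  assumes d: "d \<in> doc_space m" and S: "S \<subseteq> {..<m}" and c: "0 < c"
    and gt: "\<forall>j\<in>S. d j > 1 / real c"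
  shows "card S < c"
proof (rule ccontr)
  assume "\<not> card S < c"
  then have card: "real c \<le> real (card S)" by simp
  then have "S \<noteq> {}" using c by auto
  have "finite S" using S finite_subset by blast
  have "(\<Sum>j\<in>S. 1 / real c) \<ge> 1"
    using card c by (simp add: field_simps)
  moreover have "(\<Sum>j\<in>S. 1 / real c) < (\<Sum>j\<in>S. d j)"
    using \<open>finite S\<close> \<open>S \<noteq> {}\<close> gt by (intro sum_strict_mono) auto
  moreover have "(\<Sum>j\<in>S. d j) \<le> (\<Sum>j<m. d j)"
    using d S unfolding doc_space_def by (intro sum_mono2) auto
  moreover have "(\<Sum>j<m. d j) \<le> 1" using d unfolding doc_space_def by simp
  ultimately show False by linarith
qed

lemma profile_ex_win_val_le_inverse:
  assumes prof: "profile n m s" and c: "1 \<le> c" and few: "n * (c - 1) < m"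
  shows "\<exists>j<m. win_val n f t s j \<le> 1 / real c"
proof (rule ccontr)
  assume "\<not> ?thesis"
  then have big: "\<forall>j<m. win_val n f t s j > 1 / real c" by force
  have "0 < 1 / real c" using c by simp
  with big have "\<forall>j<m. win_val n f t s j \<noteq> 0" by force
  then have "\<forall>j<m. \<exists>i<n. win_val n f t s j = s i j"
    using win_val_nonzero_obtains_winner by blast
  then obtain g where g: "\<forall>j<m. g j < n \<and> win_val n f t s j = s (g j) j" by metis
  define won where "won i = {j. j < m \<and> g j = i}" for i
  have won_card: "card (won i) \<le> c - 1" if "i < n" for i
  proof -
    have "s i \<in> doc_space m" using prof that unfolding profile_def by blast
    moreover have "\<forall>j\<in>won i. s i j > 1 / real c" using big g unfolding won_def by auto
    moreover have "won i \<subseteq> {..<m}" unfolding won_def by auto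
    ultimately have "card (won i) < c"
      using c by (intro doc_space_card_entries_gt_inverse) auto
    then show ?thesis by simp
  qed
  have "{..<m} = (\<Union>i<n. won i)" using g unfolding won_def by auto
  then have "m = card (\<Union>i<n. won i)" by (metis card_lessThan)
  also have "\<dots> \<le> (\<Sum>i<n. card (won i))" by (rule card_UN_le) simp
  also have "\<dots> \<le> (\<Sum>i<n. c - 1)" by (intro sum_mono won_card) simp
  also have "\<dots> = n * (c - 1)" by simp
  finally show False using few by simp
qed

lemma nat_ceiling_divide:
  fixes m n :: nat
  assumes "0 < n" and "0 < m"
  obtains c :: nat where "of_int \<lceil>real m / real n\<rceil> = real c" and "1 \<le> c" and "n * (c - 1) < m"
proof
  let ?c = "nat \<lceil>real m / real n\<rceil>"
  have "0 < real m / real n" using assms by simp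
  then show cint: "of_int \<lceil>real m / real n\<rceil> = real ?c" and c: "1 \<le> ?c"
    using le_of_int_ceiling[of "real m / real n"] by linarith+
  have "real ?c - 1 < real m / real n" using cint ceiling_correct[of "real m / real n"] by linarith
  then have "real (n * (?c - 1)) < real m" using assms(1) c by (simp add: of_nat_diff field_simps)
  then show "n * (?c - 1) < m" by linarith
qed

theorem lemma2:
  fixes n m :: nat and p t :: real and f :: "real \<Rightarrow> real"
    and s :: "nat \<Rightarrow> nat \<Rightarrow> real"
  assumes "0 < n" and "n < m"
    and "0 < p" and "p \<le> 1"
    and "single_peaked f p"
    and "pure_equilibrium n m f t s"
    and "( 1 / (of_int \<lceil>2 * real m / real n\<rceil> - 1) < p
           \<and> p \<le> 1 / of_int \<lceil>real m / real n\<rceil>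
           \<and> t > p - (p * (of_int \<lfloor>1 / p\<rfloor> + 1) - 1)
                     / (of_int \<lceil>2 * real m / real n\<rceil> - of_int \<lfloor>1 / p\<rfloor>)
           \<and> (\<forall>j<m. win_val n f t s j = p) )
       \<or> ( p > 1 / of_int \<lceil>real m / real n\<rceil>
           \<and> (\<exists>\<epsilon>>0. (m mod n = 0 \<longrightarrow> t \<ge> (1 - real n / real m) * (real n / real m) + \<epsilon>)
                    \<and> (m mod n \<noteq> 0 \<longrightarrow> t \<ge> 1 / of_int \<lceil>real m / real n\<rceil>))
           \<and> (\<forall>j<m. win_val n f t s j = 1 / of_int \<lceil>real m / real n\<rceil>) )"
  shows "(\<forall>s'. profile n m s' \<longrightarrow> SW n m p f t s' \<le> SW n m p f t s)
         \<and> (\<forall>j<m. winners n f t s j \<noteq> {})"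
proof (intro conjI allI impI)
  fix s' assume prof: "profile n m s'"
  have "0 < m" using assms(2) by simp
  from assms(7) show "SW n m p f t s' \<le> SW n m p f t s"
  proof (elim disjE conjE)
    assume "\<forall>j<m. win_val n f t s j = p"
    then have "SW n m p f t s = 0" using SW_const_win_val[OF \<open>0 < m\<close>, of n f t s p p] by simp
    then show ?thesis using SW_le_win_val_dist[OF \<open>0 < m\<close>] by (smt (verit))
  next
    assume "p > 1 / of_int \<lceil>real m / real n\<rceil>"
      and "\<forall>j<m. win_val n f t s j = 1 / of_int \<lceil>real m / real n\<rceil>"
    moreover obtain c where cint: "of_int \<lceil>real m / real n\<rceil> = real c"
      and "1 \<le> c" and "n * (c - 1) < m"
      using nat_ceiling_divide assms(1) \<open>0 < m\<close> .
    ultimately have "p > 1 / real c" and "\<forall>j<m. win_val n f t s j = 1 / real c"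
      using cint by auto
    moreover from this(2) have "SW n m p f t s = - \<bar>p - 1 / real c\<bar>"
      by (rule SW_const_win_val[OF \<open>0 < m\<close>])
    moreover obtain j where "j < m" and "win_val n f t s' j \<le> 1 / real c"
      using profile_ex_win_val_le_inverse[OF prof \<open>1 \<le> c\<close> \<open>n * (c - 1) < m\<close>] by blast
    ultimately show ?thesis using SW_le_win_val_dist[of j m] by (smt (verit))
  qed
next
  fix j assume "j < m"
  then show "winners n f t s j \<noteq> {}" using assms(6) unfolding pure_equilibrium_def by blast
qed

end
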